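(* Let $A\in\mathbb{R}^{n\times n}$ be nonsingular with $A\geq 0$ and $A^{-1}\geq 0$, and let $(U_k^{(i)},V_k^{(i)},E_k)_{k=1}^{p}$, $i=1,2$, be two weak regular multisplittings of $A$ (with the same weighting matrices $E_k$). If $[U_k^{(1)}]^{-1}\geq[U_k^{(2)}]^{-1}$ for each $k=1,\ldots,p$, then $\rho(H_1)\leq\rho(H_2)<1$, where $H_i=\sum_{k=1}^{p}E_k[U_k^{(i)}]^{-1}V_k^{(i)}$ for $i=1,2$.
   Context: Inequalities are entrywise; $\rho(\cdot)$ is the spectral radius. A splitting $A=U-V$ of $A\in\mathbb{R}^{n\times n}$ is weak regular if $U$ is nonsingular, $U^{-1}\geq 0$ and $U^{-1}V\geq 0$. A weak regular multisplitting of $A$ is a triplet $(U_k,V_k,E_k)_{k=1}^{p}$ where each $A=U_k-V_k$ is a weak regular splitting and each $E_k\geq 0$ is an $n\times n$ diagonal matrix with $\sum_{k=1}^{p}E_k=I$. *)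

theory Defs
  imports "Jordan_Normal_Form.Spectral_Radius"
begin

definition msum :: "nat \<Rightarrow> nat \<Rightarrow> (nat \<Rightarrow> real mat) \<Rightarrow> real mat" where
  "msum n p f = mat n n (\<lambda>ij. \<Sum>k<p. f k $$ ij)"

text \<open>The (two-sided) inverse of a square matrix (only meaningful if it is invertible).\<close>
definition inv_mat :: "real mat \<Rightarrow> real mat" where
  "inv_mat U = (SOME B. B \<in> carrier_mat (dim_row U) (dim_row U) \<and>
                        U * B = 1\<^sub>m (dim_row U) \<and> B * U = 1\<^sub>m (dim_row U))"

definition rho :: "real mat \<Rightarrow> real" where
  "rho M = spectral_radius (map_mat complex_of_real M)"

definition weak_regular_splitting :: "nat \<Rightarrow> real mat \<Rightarrow> real mat \<Rightarrow> real mat \<Rightarrow> bool" where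
  "weak_regular_splitting n A U V \<longleftrightarrow>
     A \<in> carrier_mat n n \<and> U \<in> carrier_mat n n \<and> V \<in> carrier_mat n n \<and>
     A = U - V \<and> invertible_mat U \<and>
     inv_mat U \<ge> 0\<^sub>m n n \<and> inv_mat U * V \<ge> 0\<^sub>m n n"

definition weak_regular_multisplitting ::
  "nat \<Rightarrow> real mat \<Rightarrow> nat \<Rightarrow> (nat \<Rightarrow> real mat) \<Rightarrow> (nat \<Rightarrow> real mat) \<Rightarrow> (nat \<Rightarrow> real mat) \<Rightarrow> bool" where
  "weak_regular_multisplitting n A p U V E \<longleftrightarrow>
     (\<forall>k<p. weak_regular_splitting n A (U k) (V k) \<and>
            E k \<in> carrier_mat n n \<and> diagonal_mat (E k) \<and> E k \<ge> 0\<^sub>m n n) \<and>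
     msum n p E = 1\<^sub>m n"

definition iter_mat :: "nat \<Rightarrow> nat \<Rightarrow> (nat \<Rightarrow> real mat) \<Rightarrow> (nat \<Rightarrow> real mat) \<Rightarrow> (nat \<Rightarrow> real mat) \<Rightarrow> real mat" where
  "iter_mat n p U V E = msum n p (\<lambda>k. E k * inv_mat (U k) * V k)"

end

theory Submission
  imports Defs
begin

text \<open>
  Write \<open>H = I - M A\<close> with \<open>M = \<Sum>\<^sub>k E\<^sub>k U\<^sub>k\<^sup>-\<^sup>1 \<ge> 0\<close>. Since \<open>A \<ge> 0\<close>, the hypothesis on the
  inverses of the \<open>U\<^sub>k\<close> gives \<open>0 \<le> H\<^sub>1 \<le> H\<^sub>2\<close> entrywise, and the spectral radius is
  monotone on nonnegative matrices: for an eigenvector \<open>v\<close> of \<open>H\<^sub>1\<close> belonging to an eigenvalue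
  of maximal modulus, \<open>\<rho>(H\<^sub>1) |v| \<le> H\<^sub>1 |v| \<le> H\<^sub>2 |v|\<close>; and a nonnegative vector \<open>a \<noteq> 0\<close>
  with \<open>r a \<le> C a\<close> forces \<open>r \<le> \<rho>(C)\<close>, since otherwise the powers of \<open>C/\<mu>\<close>
  (\<open>\<rho>(C) < \<mu> < r\<close>) would be bounded while \<open>(r/\<mu>)\<^sup>k a \<le> (C/\<mu>)\<^sup>k a\<close> grows.

  For \<open>\<rho>(H) < 1\<close>, suppose \<open>\<rho>(H) \<ge> 1\<close> and let \<open>a = |w|\<close> for a left eigenvector \<open>w\<close> of
  maximal modulus. Then \<open>a\<^sup>T \<le> a\<^sup>T H = a\<^sup>T - (a\<^sup>T M) A\<close>, so the nonnegative row
  \<open>a\<^sup>T M A\<close> vanishes and, \<open>A\<close> being invertible, \<open>a\<^sup>T M = 0\<close>. This is the sum of the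
  nonnegative rows \<open>a\<^sup>T E\<^sub>k U\<^sub>k\<^sup>-\<^sup>1\<close>, so each \<open>a\<^sup>T E\<^sub>k\<close> vanishes and
  \<open>a\<^sup>T = \<Sum>\<^sub>k a\<^sup>T E\<^sub>k = 0\<close>.
\<close>

section \<open>Nonnegative matrices and vectors\<close>

lemma nonneg_mult_mat:
  fixes X Y :: "'a :: ordered_semiring_0 mat"
  assumes "X \<in> carrier_mat n m" "0\<^sub>m n m \<le> X" "Y \<in> carrier_mat m q" "0\<^sub>m m q \<le> Y"
  shows "0\<^sub>m n q \<le> X * Y"
  using assms unfolding less_eq_mat_def
  by (auto simp: scalar_prod_def intro!: sum_nonneg mult_nonneg_nonneg)

lemma mult_mat_mono_left:
  fixes X Y Z :: "'a :: ordered_semiring_0 mat"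
  assumes "X \<le> Y" "Y \<in> carrier_mat n m" "Z \<in> carrier_mat m q" "0\<^sub>m m q \<le> Z"
  shows "X * Z \<le> Y * Z"
  using assms unfolding less_eq_mat_def
  by (auto simp: scalar_prod_def intro!: sum_mono mult_right_mono)

lemma mult_mat_mono_right:
  fixes X Y Z :: "'a :: ordered_semiring_0 mat"
  assumes "Z \<in> carrier_mat n m" "0\<^sub>m n m \<le> Z" "X \<le> Y" "Y \<in> carrier_mat m q"
  shows "Z * X \<le> Z * Y"
  using assms unfolding less_eq_mat_def
  by (auto simp: scalar_prod_def intro!: sum_mono mult_left_mono)

lemma less_eq_vecD:
  "v \<le> w \<Longrightarrow> i < dim_vec w \<Longrightarrow> v $ i \<le> w $ i"
  unfolding less_eq_vec_def by auto

lemma smult_vec_mono: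
  fixes c :: "'a :: ordered_semiring"
  shows "0 \<le> c \<Longrightarrow> v \<le> w \<Longrightarrow> c \<cdot>\<^sub>v v \<le> c \<cdot>\<^sub>v w"
  unfolding less_eq_vec_def by (auto intro: mult_left_mono)

lemma mult_mat_vec_mono:
  fixes X :: "'a :: ordered_semiring_0 mat"
  assumes "X \<in> carrier_mat n m" "0\<^sub>m n m \<le> X" "v \<le> w" "w \<in> carrier_vec m"
  shows "X *\<^sub>v v \<le> X *\<^sub>v w"
  using assms unfolding less_eq_mat_def less_eq_vec_def
  by (auto simp: scalar_prod_def intro!: sum_mono mult_left_mono)

lemma mult_mat_vec_mono_mat:
  fixes X Y :: "'a :: ordered_semiring_0 mat"
  assumes "X \<le> Y" "Y \<in> carrier_mat n m" "v \<in> carrier_vec m" "0\<^sub>v m \<le> v"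
  shows "X *\<^sub>v v \<le> Y *\<^sub>v v"
  using assms unfolding less_eq_mat_def less_eq_vec_def
  by (auto simp: scalar_prod_def intro!: sum_mono mult_right_mono)

lemma nonneg_mult_mat_vec:
  fixes X :: "'a :: ordered_semiring_0 mat"
  assumes "X \<in> carrier_mat n m" "0\<^sub>m n m \<le> X" "v \<in> carrier_vec m" "0\<^sub>v m \<le> v"
  shows "0\<^sub>v n \<le> X *\<^sub>v v"
  using assms unfolding less_eq_mat_def less_eq_vec_def
  by (auto simp: scalar_prod_def intro!: sum_nonneg mult_nonneg_nonneg)

lemma carrier_vec_eq_0_iff:
  "v \<in> carrier_vec n \<Longrightarrow> v = 0\<^sub>v n \<longleftrightarrow> (\<forall>i<n. v $ i = 0)"
  by (auto intro: eq_vecI)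

lemma mult_mat_zero_vec:
  "X \<in> carrier_mat n m \<Longrightarrow> X *\<^sub>v 0\<^sub>v m = 0\<^sub>v n"
  by (intro eq_vecI) auto

lemma left_invertible_transpose_mult_vec_eq_0:
  fixes W U :: "'a :: comm_ring_1 mat"
  assumes W: "W \<in> carrier_mat n n" "W * U = 1\<^sub>m n" and U: "U \<in> carrier_mat n n"
    and x: "x \<in> carrier_vec n" "W\<^sup>T *\<^sub>v x = 0\<^sub>v n"
  shows "x = 0\<^sub>v n"
proof -
  have "x = (W * U)\<^sup>T *\<^sub>v x" using W(2) x(1) by simp
  also have "\<dots> = U\<^sup>T *\<^sub>v (W\<^sup>T *\<^sub>v x)"
    using W(1) U x(1) by (simp add: transpose_mult[of _ n n] assoc_mult_mat_vec[of _ n n _ n])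
  also have "\<dots> = 0\<^sub>v n" using U x(2) by (simp add: mult_mat_zero_vec)
  finally show ?thesis .
qed

lemma nonneg_transpose_mat:
  "0\<^sub>m n m \<le> X \<Longrightarrow> 0\<^sub>m m n \<le> X\<^sup>T"
  unfolding less_eq_mat_def by auto

lemma nonneg_pow_mat:
  fixes C :: "'a :: ordered_semiring_1 mat"
  assumes "C \<in> carrier_mat n n" "0\<^sub>m n n \<le> C"
  shows "0\<^sub>m n n \<le> C ^\<^sub>m k"
proof (induction k)
  case 0
  show ?case using assms unfolding less_eq_mat_def by auto
next
  case (Suc k)
  with assms show ?case using nonneg_mult_mat[of "C ^\<^sub>m k" n n C n] by simp
qed

lemma smult_pow_mult_vec_le:
  fixes C :: "'a :: linordered_field mat"
  assumes C: "C \<in> carrier_mat n n" "0\<^sub>m n n \<le> C" and a: "a \<in> carrier_vec n"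
    and q: "0 \<le> q" and sub: "q \<cdot>\<^sub>v a \<le> C *\<^sub>v a"
  shows "q ^ k \<cdot>\<^sub>v a \<le> C ^\<^sub>m k *\<^sub>v a"
proof (induction k)
  case 0
  show ?case using C a by simp
next
  case (Suc k)
  have "q ^ Suc k \<cdot>\<^sub>v a = q \<cdot>\<^sub>v (q ^ k \<cdot>\<^sub>v a)" by (simp add: smult_smult_assoc)
  also have "\<dots> \<le> q \<cdot>\<^sub>v (C ^\<^sub>m k *\<^sub>v a)" using q Suc by (rule smult_vec_mono)
  also have "\<dots> = C ^\<^sub>m k *\<^sub>v (q \<cdot>\<^sub>v a)" by (rule mult_mat_vec[symmetric, OF pow_carrier_mat[OF C(1)] a])
  also have "\<dots> \<le> C ^\<^sub>m k *\<^sub>v (C *\<^sub>v a)"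
    by (rule mult_mat_vec_mono[OF pow_carrier_mat[OF C(1)] nonneg_pow_mat[OF C] sub]) (use C a in simp)
  also have "\<dots> = C ^\<^sub>m Suc k *\<^sub>v a"
    using assoc_mult_mat_vec[OF pow_carrier_mat[OF C(1)] C(1) a] by simp
  finally show ?case .
qed

section \<open>Spectral radius of nonnegative matrices\<close>

lemma rho_mem_max:
  assumes "C \<in> carrier_mat n n" "0 < n"
  shows "\<exists>z. eigenvalue (map_mat complex_of_real C) z \<and> rho C = norm z"
    "eigenvalue (map_mat complex_of_real C) z \<Longrightarrow> norm z \<le> rho C"
  using spectral_radius_mem_max[of "map_mat complex_of_real C" n] assms
  unfolding rho_def spectrum_def by auto

lemma rho_nonneg:
  assumes "C \<in> carrier_mat n n" "0 < n"
  shows "0 \<le> rho C"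
  using rho_mem_max(1)[OF assms] by auto

lemma rho_smult_le:
  assumes C: "C \<in> carrier_mat n n" and n: "0 < n" and c: "0 < c"
  shows "rho (c \<cdot>\<^sub>m C) \<le> c * rho C"
proof -
  let ?C = "map_mat complex_of_real C"
  have sC: "c \<cdot>\<^sub>m C \<in> carrier_mat n n" using C by simp
  obtain z where "eigenvalue (map_mat complex_of_real (c \<cdot>\<^sub>m C)) z"
    and rz: "rho (c \<cdot>\<^sub>m C) = norm z"
    using rho_mem_max(1)[OF sC n] by blast
  then obtain v where v: "v \<in> carrier_vec n" "v \<noteq> 0\<^sub>v n"
    and ev: "map_mat complex_of_real (c \<cdot>\<^sub>m C) *\<^sub>v v = z \<cdot>\<^sub>v v"
    using C unfolding eigenvalue_def eigenvector_def by auto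
  have "?C *\<^sub>v v = (z / of_real c) \<cdot>\<^sub>v v"
  proof (rule eq_vecI)
    fix i assume "i < dim_vec ((z / of_real c) \<cdot>\<^sub>v v)"
    hence i: "i < n" using v by simp
    have "of_real c * (?C *\<^sub>v v) $ i = (map_mat complex_of_real (c \<cdot>\<^sub>m C) *\<^sub>v v) $ i"
      using C i v by (auto simp: scalar_prod_def sum_distrib_left mult.assoc intro!: sum.cong)
    with ev c i v show "(?C *\<^sub>v v) $ i = ((z / of_real c) \<cdot>\<^sub>v v) $ i"
      by (auto simp: field_simps)
  qed (use C v in simp)
  with v C have "eigenvalue ?C (z / of_real c)"
    unfolding eigenvalue_def eigenvector_def by auto
  from rho_mem_max(2)[OF C n this] c have "norm z / c \<le> rho C"
    by (simp add: norm_divide)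
  with rz c show ?thesis by (simp add: field_simps)
qed

lemma rho_less_1_pow_bounded:
  assumes C: "C \<in> carrier_mat n n" and "rho C < 1"
  obtains b where "\<And>k i j. i < n \<Longrightarrow> j < n \<Longrightarrow> (C ^\<^sub>m k) $$ (i,j) \<le> b"
proof -
  let ?C = "map_mat complex_of_real C"
  obtain b where b: "\<And>k. norm_bound (?C ^\<^sub>m k) b"
    using spectral_radius_jnf_norm_bound_less_1_upper_triangular[of ?C n] assms
    unfolding rho_def by auto
  have "(C ^\<^sub>m k) $$ (i,j) \<le> b" if "i < n" "j < n" for k i j
  proof -
    have "?C ^\<^sub>m k = map_mat complex_of_real (C ^\<^sub>m k)"
      by (rule of_real_hom.mat_hom_pow[OF C, symmetric])
    with b[of k] that C show ?thesis
      unfolding norm_bound_def by (metis (no_types) abs_le_D1 carrier_matD index_map_mat norm_of_real pow_carrier_mat)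
  qed
  with that show ?thesis by blast
qed

lemma one_le_rho_of_subinvariant:
  assumes R: "R \<in> carrier_mat n n" "0\<^sub>m n n \<le> R"
    and a: "a \<in> carrier_vec n" "0\<^sub>v n \<le> a" "a \<noteq> 0\<^sub>v n"
    and q: "1 < q" and sub: "q \<cdot>\<^sub>v a \<le> R *\<^sub>v a"
  shows "1 \<le> rho R"
proof (rule ccontr)
  assume "\<not> 1 \<le> rho R"
  then obtain b where b: "\<And>k i j. i < n \<Longrightarrow> j < n \<Longrightarrow> (R ^\<^sub>m k) $$ (i,j) \<le> b"
    using rho_less_1_pow_bounded[OF R(1)] by force
  obtain i where i: "i < n" "a $ i \<noteq> 0" using a(1,3) by (auto simp: carrier_vec_eq_0_iff)
  with less_eq_vecD[OF a(2), of i] a(1) have ai: "0 < a $ i" by simp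
  have "q ^ k \<cdot>\<^sub>v a \<le> R ^\<^sub>m k *\<^sub>v a" for k
    using smult_pow_mult_vec_le[OF R a(1) _ sub] q by simp
  hence "q ^ k * a $ i \<le> (R ^\<^sub>m k *\<^sub>v a) $ i" for k
    using less_eq_vecD[of _ _ i] i a(1) R(1) by fastforce
  moreover have "(R ^\<^sub>m k *\<^sub>v a) $ i \<le> (\<Sum>j<n. b * a $ j)" for k
  proof -
    have "(R ^\<^sub>m k *\<^sub>v a) $ i = (\<Sum>j<n. (R ^\<^sub>m k) $$ (i,j) * a $ j)"
      using i a R by (simp add: scalar_prod_def lessThan_atLeast0)
    also have "\<dots> \<le> (\<Sum>j<n. b * a $ j)"
      using less_eq_vecD[OF a(2)] a(1) b i by (intro sum_mono mult_right_mono) auto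
    finally show ?thesis .
  qed
  moreover obtain k where "(\<Sum>j<n. b * a $ j) / a $ i < q ^ k" using real_arch_pow[OF q] by blast
  ultimately show False using ai by (meson divide_less_eq order.trans not_le)
qed

lemma rho_ge_of_subinvariant:
  assumes C: "C \<in> carrier_mat n n" "0\<^sub>m n n \<le> C"
    and a: "a \<in> carrier_vec n" "0\<^sub>v n \<le> a" "a \<noteq> 0\<^sub>v n"
    and sub: "r \<cdot>\<^sub>v a \<le> C *\<^sub>v a"
  shows "r \<le> rho C"
proof (rule ccontr)
  assume "\<not> r \<le> rho C"
  have n: "0 < n" using carrier_vec_eq_0_iff[OF a(1)] a(3) by (cases n) auto
  define mu where "mu = (rho C + r) / 2"
  have mu: "0 < mu" "rho C < mu" "mu < r"
    using \<open>\<not> r \<le> rho C\<close> rho_nonneg[OF C(1) n] unfolding mu_def by auto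
  define R where "R = (1 / mu) \<cdot>\<^sub>m C"
  have R: "R \<in> carrier_mat n n" "0\<^sub>m n n \<le> R"
    using C mu unfolding R_def less_eq_mat_def by auto
  have "R *\<^sub>v a = (1 / mu) \<cdot>\<^sub>v (C *\<^sub>v a)"
    using C a by (intro eq_vecI) (auto simp: R_def scalar_prod_def sum_distrib_left)
  moreover have "(r / mu) \<cdot>\<^sub>v a = (1 / mu) \<cdot>\<^sub>v (r \<cdot>\<^sub>v a)" by (simp add: smult_smult_assoc)
  ultimately have "(r / mu) \<cdot>\<^sub>v a \<le> R *\<^sub>v a"
    using smult_vec_mono[OF _ sub, of "1 / mu"] mu by simp
  with mu have "1 \<le> rho R" by (intro one_le_rho_of_subinvariant[OF R a]) auto
  also have "rho R \<le> rho C / mu"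
    unfolding R_def using rho_smult_le[OF C(1) n, of "1 / mu"] mu by simp
  also have "\<dots> < 1" using mu by simp
  finally show False by simp
qed

lemma norm_eigenvector_subinvariant:
  assumes H: "H \<in> carrier_mat n n" "0\<^sub>m n n \<le> H"
    and ev: "eigenvector (map_mat complex_of_real H) v z"
  shows "norm z \<cdot>\<^sub>v map_vec norm v \<le> H *\<^sub>v map_vec norm v"
proof -
  have v: "v \<in> carrier_vec n" "map_mat complex_of_real H *\<^sub>v v = z \<cdot>\<^sub>v v"
    using ev H unfolding eigenvector_def by auto
  have "norm z * norm (v $ i) \<le> (\<Sum>j<n. H $$ (i,j) * norm (v $ j))" if i: "i < n" for i
  proof -
    have "z * v $ i = (map_mat complex_of_real H *\<^sub>v v) $ i" using v i by simp
    also have "\<dots> = (\<Sum>j<n. of_real (H $$ (i,j)) * v $ j)"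
      using H v(1) i by (simp add: scalar_prod_def lessThan_atLeast0)
    finally have "norm z * norm (v $ i) = norm (\<Sum>j<n. of_real (H $$ (i,j)) * v $ j)"
      by (metis norm_mult)
    also have "\<dots> \<le> (\<Sum>j<n. norm (of_real (H $$ (i,j)) * v $ j))" by (rule norm_sum)
    also have "\<dots> = (\<Sum>j<n. H $$ (i,j) * norm (v $ j))"
      using H i unfolding less_eq_mat_def by (auto simp: norm_mult intro!: sum.cong)
    finally show ?thesis .
  qed
  with H v show ?thesis
    unfolding less_eq_vec_def by (auto simp: scalar_prod_def lessThan_atLeast0)
qed

lemma nonneg_rho_subinvariant:
  assumes H: "H \<in> carrier_mat n n" "0 < n" "0\<^sub>m n n \<le> H"
  obtains a where "a \<in> carrier_vec n" "0\<^sub>v n \<le> a" "a \<noteq> 0\<^sub>v n" "rho H \<cdot>\<^sub>v a \<le> H *\<^sub>v a"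
proof -
  obtain z where "eigenvalue (map_mat complex_of_real H) z" and rz: "rho H = norm z"
    using rho_mem_max(1)[OF H(1,2)] by blast
  then obtain v where ev: "eigenvector (map_mat complex_of_real H) v z"
    unfolding eigenvalue_def by blast
  hence v: "v \<in> carrier_vec n" "v \<noteq> 0\<^sub>v n" using H unfolding eigenvector_def by auto
  hence "map_vec norm v \<noteq> 0\<^sub>v n" by (simp add: carrier_vec_eq_0_iff)
  moreover have "0\<^sub>v n \<le> map_vec norm v" using v unfolding less_eq_vec_def by auto
  ultimately show ?thesis
    using that[of "map_vec norm v"] v norm_eigenvector_subinvariant[OF H(1,3) ev] rz by auto
qed

lemma rho_mono:
  assumes H: "H \<in> carrier_mat n n" "0 < n" "0\<^sub>m n n \<le> H" and HK: "H \<le> K"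
  shows "rho H \<le> rho K"
proof -
  have K: "K \<in> carrier_mat n n" "0\<^sub>m n n \<le> K"
    using H HK order_trans[OF H(3) HK] unfolding less_eq_mat_def by auto
  obtain a where a: "a \<in> carrier_vec n" "0\<^sub>v n \<le> a" "a \<noteq> 0\<^sub>v n" "rho H \<cdot>\<^sub>v a \<le> H *\<^sub>v a"
    using nonneg_rho_subinvariant[OF H] .
  have "rho H \<cdot>\<^sub>v a \<le> K *\<^sub>v a"
    using a(4) mult_mat_vec_mono_mat[OF HK K(1) a(1,2)] by (rule order_trans)
  from rho_ge_of_subinvariant[OF K a(1-3) this] show ?thesis .
qed

lemma rho_transpose:
  assumes H: "H \<in> carrier_mat n n"
  shows "rho H\<^sup>T = rho H"
proof -
  let ?H = "map_mat complex_of_real H"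
  have "spectrum ?H\<^sup>T = spectrum ?H"
    using H spectrum_root_char_poly[of ?H n] spectrum_root_char_poly[of "?H\<^sup>T" n]
    by (simp add: char_poly_transpose_mat[of ?H n])
  then show ?thesis
    unfolding rho_def spectral_radius_def map_mat_transpose[symmetric] by simp
qed

section \<open>Weak regular multisplittings\<close>

lemma dim_msum [simp]: "dim_row (msum n p f) = n" "dim_col (msum n p f) = n"
  by (simp_all add: msum_def)

lemma msum_carrier [simp]: "msum n p f \<in> carrier_mat n n"
  by (simp add: carrier_matI)

lemma msum_mono:
  assumes "\<And>k. k < p \<Longrightarrow> f k \<le> g k" and g: "\<And>k. k < p \<Longrightarrow> g k \<in> carrier_mat n n"
  shows "msum n p f \<le> msum n p g"
  using assms g[THEN carrier_matD(1)] g[THEN carrier_matD(2)] unfolding less_eq_mat_def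
  by (auto simp: msum_def intro!: sum_mono)

lemma msum_minus:
  assumes f: "\<And>k. k < p \<Longrightarrow> f k \<in> carrier_mat n n" and g: "\<And>k. k < p \<Longrightarrow> g k \<in> carrier_mat n n"
  shows "msum n p (\<lambda>k. f k - g k) = msum n p f - msum n p g"
  using g[THEN carrier_matD(1)] g[THEN carrier_matD(2)]
  by (intro eq_matI) (auto simp: msum_def sum_subtractf[symmetric] intro!: sum.cong)

lemma msum_mult:
  assumes f: "\<And>k. k < p \<Longrightarrow> f k \<in> carrier_mat n n" and B: "B \<in> carrier_mat n n"
  shows "msum n p (\<lambda>k. f k * B) = msum n p f * B"
proof (rule eq_matI)
  fix i j assume "i < dim_row (msum n p f * B)" "j < dim_col (msum n p f * B)"
  hence ij: "i < n" "j < n" using B by (auto simp: msum_def)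
  have "msum n p (\<lambda>k. f k * B) $$ (i,j) = (\<Sum>k<p. \<Sum>l<n. f k $$ (i,l) * B $$ (l,j))"
    using f[THEN carrier_matD(1)] f[THEN carrier_matD(2)] B ij
    by (auto simp: msum_def scalar_prod_def lessThan_atLeast0 intro!: sum.cong)
  also have "\<dots> = (\<Sum>l<n. (\<Sum>k<p. f k $$ (i,l)) * B $$ (l,j))"
    by (subst sum.swap) (simp add: sum_distrib_right)
  also have "\<dots> = (msum n p f * B) $$ (i,j)"
    using B ij by (simp add: msum_def scalar_prod_def lessThan_atLeast0)
  finally show "msum n p (\<lambda>k. f k * B) $$ (i,j) = (msum n p f * B) $$ (i,j)" .
qed (use B in \<open>auto simp: msum_def\<close>)

lemma transpose_msum:
  assumes f: "\<And>k. k < p \<Longrightarrow> f k \<in> carrier_mat n n"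
  shows "(msum n p f)\<^sup>T = msum n p (\<lambda>k. (f k)\<^sup>T)"
  using f[THEN carrier_matD(1)] f[THEN carrier_matD(2)]
  by (intro eq_matI) (auto simp: msum_def intro!: sum.cong)

lemma index_msum_mult_vec:
  assumes f: "\<And>k. k < p \<Longrightarrow> f k \<in> carrier_mat n n" and a: "a \<in> carrier_vec n" and i: "i < n"
  shows "(msum n p f *\<^sub>v a) $ i = (\<Sum>k<p. (f k *\<^sub>v a) $ i)"
proof -
  have "(msum n p f *\<^sub>v a) $ i = (\<Sum>l<n. (\<Sum>k<p. f k $$ (i,l)) * a $ l)"
    using a i by (simp add: msum_def scalar_prod_def lessThan_atLeast0)
  also have "\<dots> = (\<Sum>k<p. \<Sum>l<n. f k $$ (i,l) * a $ l)"
    by (subst sum.swap) (simp add: sum_distrib_right)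
  also have "\<dots> = (\<Sum>k<p. (f k *\<^sub>v a) $ i)"
    using f[THEN carrier_matD(1)] f[THEN carrier_matD(2)] a i
    by (auto simp: scalar_prod_def lessThan_atLeast0 intro!: sum.cong)
  finally show ?thesis .
qed

lemma msum_mult_vec_eq_0_iff:
  assumes f: "\<And>k. k < p \<Longrightarrow> f k \<in> carrier_mat n n" and a: "a \<in> carrier_vec n"
    and nonneg: "\<And>k. k < p \<Longrightarrow> 0\<^sub>v n \<le> f k *\<^sub>v a"
  shows "msum n p f *\<^sub>v a = 0\<^sub>v n \<longleftrightarrow> (\<forall>k<p. f k *\<^sub>v a = 0\<^sub>v n)"
proof -
  have entry_nonneg: "0 \<le> (f k *\<^sub>v a) $ i" if "k < p" "i < n" for k i
    using less_eq_vecD[OF nonneg[OF that(1)], of i] f[OF that(1)] that(2) by simp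
  have "msum n p f *\<^sub>v a = 0\<^sub>v n \<longleftrightarrow> (\<forall>i<n. (msum n p f *\<^sub>v a) $ i = 0)"
    by (rule carrier_vec_eq_0_iff[OF mult_mat_vec_carrier[OF msum_carrier a]])
  also have "\<dots> \<longleftrightarrow> (\<forall>i<n. (\<Sum>k<p. (f k *\<^sub>v a) $ i) = 0)"
    using index_msum_mult_vec[OF f a] by simp
  also have "\<dots> \<longleftrightarrow> (\<forall>i<n. \<forall>k<p. (f k *\<^sub>v a) $ i = 0)"
    using sum_nonneg_eq_0_iff[of "{..<p}" "\<lambda>k. (f k *\<^sub>v a) $ _"] entry_nonneg by auto
  also have "\<dots> \<longleftrightarrow> (\<forall>k<p. f k *\<^sub>v a = 0\<^sub>v n)"
    using carrier_vec_eq_0_iff[OF mult_mat_vec_carrier[OF f a]] by auto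
  finally show ?thesis .
qed

lemma msum_cong:
  "(\<And>k. k < p \<Longrightarrow> f k = g k) \<Longrightarrow> msum n p f = msum n p g"
  by (simp add: msum_def)

lemma msum_nonneg:
  assumes "\<And>k. k < p \<Longrightarrow> 0\<^sub>m n n \<le> f k"
  shows "0\<^sub>m n n \<le> msum n p f"
proof -
  have "0 \<le> f k $$ (i,j)" if "k < p" "i < n" "j < n" for k i j
    using assms[OF that(1)] that unfolding less_eq_mat_def by auto
  then show ?thesis unfolding less_eq_mat_def by (auto simp: msum_def intro!: sum_nonneg)
qed

lemma inv_mat_inverse:
  assumes U: "U \<in> carrier_mat n n" and inv: "invertible_mat U"
  shows "inv_mat U \<in> carrier_mat n n" "U * inv_mat U = 1\<^sub>m n" "inv_mat U * U = 1\<^sub>m n"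
proof -
  from inv obtain B where B1: "U * B = 1\<^sub>m n" and B2: "B * U = 1\<^sub>m (dim_row B)"
    using U unfolding invertible_mat_def inverts_mat_def by auto
  have "B \<in> carrier_mat n n"
    using arg_cong[OF B1, of dim_col] arg_cong[OF B2, of dim_col] U by auto
  with B1 B2 U have "\<exists>B. B \<in> carrier_mat (dim_row U) (dim_row U) \<and>
      U * B = 1\<^sub>m (dim_row U) \<and> B * U = 1\<^sub>m (dim_row U)"
    by auto
  from someI_ex[OF this] U
  show "inv_mat U \<in> carrier_mat n n" "U * inv_mat U = 1\<^sub>m n" "inv_mat U * U = 1\<^sub>m n"
    unfolding inv_mat_def by auto
qed

lemma weak_regular_multisplittingD:
  assumes "weak_regular_multisplitting n A p U V E" "k < p"
  shows "U k \<in> carrier_mat n n" "V k \<in> carrier_mat n n" "A = U k - V k" "invertible_mat (U k)"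
    "0\<^sub>m n n \<le> inv_mat (U k)" "0\<^sub>m n n \<le> inv_mat (U k) * V k"
    "E k \<in> carrier_mat n n" "0\<^sub>m n n \<le> E k"
  using assms unfolding weak_regular_multisplitting_def weak_regular_splitting_def by auto

definition precond_mat :: "nat \<Rightarrow> nat \<Rightarrow> (nat \<Rightarrow> real mat) \<Rightarrow> (nat \<Rightarrow> real mat) \<Rightarrow> real mat" where
  "precond_mat n p U E = msum n p (\<lambda>k. E k * inv_mat (U k))"

lemma precond_mat_carrier [simp]: "precond_mat n p U E \<in> carrier_mat n n"
  by (simp add: precond_mat_def)

lemma iter_mat_carrier [simp]: "iter_mat n p U V E \<in> carrier_mat n n"
  by (simp add: iter_mat_def)

lemma iter_mat_eq:
  assumes S: "weak_regular_multisplitting n A p U V E" and A: "A \<in> carrier_mat n n"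
  shows "iter_mat n p U V E = 1\<^sub>m n - precond_mat n p U E * A"
proof -
  note D = weak_regular_multisplittingD[OF S]
  have summand: "E k * inv_mat (U k) * V k = E k - E k * inv_mat (U k) * A" if k: "k < p" for k
  proof -
    note U = D(1,4)[OF k] and E = D(7)[OF k] and W = inv_mat_inverse[OF U]
    have "V k = U k - A" using D(1-3)[OF k] A by (intro eq_matI) auto
    hence "E k * inv_mat (U k) * V k = E k * inv_mat (U k) * U k - E k * inv_mat (U k) * A"
      using U E W A by (simp add: mult_minus_distrib_mat[of _ n n])
    also have "E k * inv_mat (U k) * U k = E k"
      using U E W by (simp add: assoc_mult_mat[of _ n n _ n _ n])
    finally show ?thesis .
  qed
  have EW: "E k * inv_mat (U k) \<in> carrier_mat n n" if "k < p" for k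
    using D(7)[OF that] inv_mat_inverse(1)[OF D(1,4)[OF that]] by simp
  have "iter_mat n p U V E = msum n p (\<lambda>k. E k - E k * inv_mat (U k) * A)"
    unfolding iter_mat_def using summand by (rule msum_cong)
  also have "\<dots> = msum n p E - msum n p (\<lambda>k. E k * inv_mat (U k) * A)"
    by (rule msum_minus) (use D(7) EW A mult_carrier_mat in blast)+
  also have "msum n p (\<lambda>k. E k * inv_mat (U k) * A) = precond_mat n p U E * A"
    unfolding precond_mat_def by (rule msum_mult[OF EW A])
  also have "msum n p E = 1\<^sub>m n"
    using S unfolding weak_regular_multisplitting_def by blast
  finally show ?thesis .
qed

lemma iter_mat_nonneg:
  assumes S: "weak_regular_multisplitting n A p U V E"
  shows "0\<^sub>m n n \<le> iter_mat n p U V E"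
  unfolding iter_mat_def
proof (rule msum_nonneg)
  fix k assume k: "k < p"
  note D = weak_regular_multisplittingD[OF S k] and W = inv_mat_inverse[OF D(1,4)]
  have "E k * inv_mat (U k) * V k = E k * (inv_mat (U k) * V k)"
    using D W by (simp add: assoc_mult_mat[of _ n n _ n _ n])
  also have "0\<^sub>m n n \<le> \<dots>"
    by (rule nonneg_mult_mat[of "E k" n n _ n]) (use D W in auto)
  finally show "0\<^sub>m n n \<le> E k * inv_mat (U k) * V k" .
qed

lemma precond_mat_nonneg:
  assumes S: "weak_regular_multisplitting n A p U V E"
  shows "0\<^sub>m n n \<le> precond_mat n p U E"
  unfolding precond_mat_def
proof (rule msum_nonneg)
  fix k assume k: "k < p"
  note D = weak_regular_multisplittingD[OF S k]
  show "0\<^sub>m n n \<le> E k * inv_mat (U k)"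
    by (rule nonneg_mult_mat[of "E k" n n _ n]) (use D inv_mat_inverse(1)[OF D(1,4)] in auto)
qed

lemma precond_mat_mono:
  assumes S: "weak_regular_multisplitting n A p U V E"
    and le: "\<And>k. k < p \<Longrightarrow> inv_mat (U' k) \<le> inv_mat (U k)"
  shows "precond_mat n p U' E \<le> precond_mat n p U E"
  unfolding precond_mat_def
proof (rule msum_mono)
  fix k assume k: "k < p"
  note D = weak_regular_multisplittingD[OF S k] and W = inv_mat_inverse(1)[OF D(1,4)]
  show "E k * inv_mat (U' k) \<le> E k * inv_mat (U k)"
    by (rule mult_mat_mono_right[of "E k" n n _ _ n]) (use D W le[OF k] in auto)
  show "E k * inv_mat (U k) \<in> carrier_mat n n" using D W by simp
qed

lemma iter_mat_mono:
  assumes S1: "weak_regular_multisplitting n A p U1 V1 E"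
    and S2: "weak_regular_multisplitting n A p U2 V2 E"
    and A: "A \<in> carrier_mat n n" "0\<^sub>m n n \<le> A"
    and le: "\<And>k. k < p \<Longrightarrow> inv_mat (U2 k) \<le> inv_mat (U1 k)"
  shows "iter_mat n p U1 V1 E \<le> iter_mat n p U2 V2 E"
proof -
  have "precond_mat n p U2 E * A \<le> precond_mat n p U1 E * A"
    using precond_mat_mono[OF S1 le] A by (intro mult_mat_mono_left[of _ _ n n]) auto
  then show ?thesis
    unfolding iter_mat_eq[OF S1 A(1)] iter_mat_eq[OF S2 A(1)] less_eq_mat_def
    using A(1) by auto
qed

lemma left_subinvariant_imp_transpose_kernel:
  fixes A M :: "real mat"
  assumes A: "A \<in> carrier_mat n n" "invertible_mat A" "0\<^sub>m n n \<le> A"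
    and M: "M \<in> carrier_mat n n" "0\<^sub>m n n \<le> M"
    and a: "a \<in> carrier_vec n" "0\<^sub>v n \<le> a" "a \<le> (1\<^sub>m n - M * A)\<^sup>T *\<^sub>v a"
  shows "M\<^sup>T *\<^sub>v a = 0\<^sub>v n"
proof -
  define b where "b = M\<^sup>T *\<^sub>v a"
  have b: "b \<in> carrier_vec n" "0\<^sub>v n \<le> b"
    unfolding b_def using M a nonneg_mult_mat_vec[OF _ nonneg_transpose_mat[OF M(2)]] by auto
  have "(1\<^sub>m n - M * A)\<^sup>T *\<^sub>v a = a - A\<^sup>T *\<^sub>v b"
    using A(1) M(1) a(1) unfolding b_def
    by (simp add: transpose_minus[of _ n n] transpose_mult[of _ n n] minus_mult_distrib_mat_vec[of _ n n]
        assoc_mult_mat_vec[of _ n n _ n])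
  with a(3) have "A\<^sup>T *\<^sub>v b \<le> 0\<^sub>v n"
    using A(1) a(1) b(1) unfolding less_eq_vec_def by auto
  moreover have "0\<^sub>v n \<le> A\<^sup>T *\<^sub>v b"
    using A b nonneg_mult_mat_vec[OF _ nonneg_transpose_mat[OF A(3)]] by auto
  ultimately have "A\<^sup>T *\<^sub>v b = 0\<^sub>v n" by (rule order.antisym)
  with A(1) inv_mat_inverse(2,1)[OF A(1,2)] b(1) show ?thesis
    unfolding b_def by (rule left_invertible_transpose_mult_vec_eq_0)
qed

lemma nonneg_kernel_precond_mat_transpose:
  assumes S: "weak_regular_multisplitting n A p U V E"
    and a: "a \<in> carrier_vec n" "0\<^sub>v n \<le> a" and Ma: "(precond_mat n p U E)\<^sup>T *\<^sub>v a = 0\<^sub>v n"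
  shows "a = 0\<^sub>v n"
proof -
  note D = weak_regular_multisplittingD[OF S]
  have W: "inv_mat (U k) \<in> carrier_mat n n" "inv_mat (U k) * U k = 1\<^sub>m n" if "k < p" for k
    using inv_mat_inverse[OF D(1,4)[OF that]] by auto
  have EW: "E k * inv_mat (U k) \<in> carrier_mat n n" if "k < p" for k
    using D(7)[OF that] W(1)[OF that] by simp
  define f where "f k = (E k * inv_mat (U k))\<^sup>T" for k
  have f: "f k \<in> carrier_mat n n" if "k < p" for k
    unfolding f_def using EW[OF that] by simp
  have Ea: "(E k)\<^sup>T *\<^sub>v a \<in> carrier_vec n" "0\<^sub>v n \<le> (E k)\<^sup>T *\<^sub>v a" if "k < p" for k
    using D(7,8)[OF that] a nonneg_mult_mat_vec[OF _ nonneg_transpose_mat] by auto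
  have fa: "f k *\<^sub>v a = (inv_mat (U k))\<^sup>T *\<^sub>v ((E k)\<^sup>T *\<^sub>v a)" if k: "k < p" for k
    unfolding f_def transpose_mult[OF D(7)[OF k] W(1)[OF k]]
    using D(7)[OF k] W(1)[OF k] a(1) by (simp add: assoc_mult_mat_vec[of _ n n _ n])
  have fa_nonneg: "0\<^sub>v n \<le> f k *\<^sub>v a" if "k < p" for k
    unfolding fa[OF that] using W(1)[OF that] D(5)[OF that] Ea[OF that]
      nonneg_mult_mat_vec[OF _ nonneg_transpose_mat] by auto
  have "msum n p f = (precond_mat n p U E)\<^sup>T"
    unfolding f_def precond_mat_def using EW by (intro transpose_msum[symmetric])
  moreover have "msum n p f *\<^sub>v a = 0\<^sub>v n \<longleftrightarrow> (\<forall>k<p. f k *\<^sub>v a = 0\<^sub>v n)"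
    by (rule msum_mult_vec_eq_0_iff) (use f a(1) fa_nonneg in auto)
  ultimately have fa0: "f k *\<^sub>v a = 0\<^sub>v n" if "k < p" for k
    using Ma that by simp
  have Ea0: "(E k)\<^sup>T *\<^sub>v a = 0\<^sub>v n" if k: "k < p" for k
    using W(1,2)[OF k] D(1)[OF k] Ea(1)[OF k]
    by (rule left_invertible_transpose_mult_vec_eq_0) (simp add: fa0[OF k, unfolded fa[OF k]])
  have "a = (msum n p E)\<^sup>T *\<^sub>v a"
    using S a(1) unfolding weak_regular_multisplitting_def by simp
  also have "\<dots> = msum n p (\<lambda>k. (E k)\<^sup>T) *\<^sub>v a" by (simp add: transpose_msum[OF D(7)])
  also have "\<dots> = 0\<^sub>v n"
    using msum_mult_vec_eq_0_iff[of p "\<lambda>k. (E k)\<^sup>T" n a] D(7) a(1) Ea Ea0 by simp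
  finally show ?thesis .
qed

lemma rho_iter_mat_less_1:
  assumes n: "0 < n" and A: "A \<in> carrier_mat n n" "invertible_mat A" "0\<^sub>m n n \<le> A"
    and S: "weak_regular_multisplitting n A p U V E"
  shows "rho (iter_mat n p U V E) < 1"
proof (rule ccontr)
  let ?H = "iter_mat n p U V E"
  assume "\<not> rho ?H < 1"
  have HT: "?H\<^sup>T \<in> carrier_mat n n" "0\<^sub>m n n \<le> ?H\<^sup>T"
    using nonneg_transpose_mat[OF iter_mat_nonneg[OF S]] by auto
  obtain a where a: "a \<in> carrier_vec n" "0\<^sub>v n \<le> a" "a \<noteq> 0\<^sub>v n"
    and sub: "rho ?H\<^sup>T \<cdot>\<^sub>v a \<le> ?H\<^sup>T *\<^sub>v a"
    using nonneg_rho_subinvariant[OF HT(1) n HT(2)] by blast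
  have "a $ i \<le> rho ?H * a $ i" if "i < n" for i
    using mult_right_mono[of 1 "rho ?H" "a $ i"] \<open>\<not> rho ?H < 1\<close> less_eq_vecD[OF a(2), of i] a(1) that
    by simp
  hence "a \<le> rho ?H\<^sup>T \<cdot>\<^sub>v a"
    using a(1) rho_transpose[OF iter_mat_carrier] unfolding less_eq_vec_def by simp
  from this sub have "a \<le> (1\<^sub>m n - precond_mat n p U E * A)\<^sup>T *\<^sub>v a"
    unfolding iter_mat_eq[OF S A(1)] by (rule order_trans)
  from left_subinvariant_imp_transpose_kernel[OF A precond_mat_carrier precond_mat_nonneg[OF S] a(1,2) this]
  have "a = 0\<^sub>v n" by (rule nonneg_kernel_precond_mat_transpose[OF S a(1,2)])
  with a(3) show False ..
qed

theorem corollary5p14: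
  fixes n p :: nat and A :: "real mat"
    and U1 V1 U2 V2 E :: "nat \<Rightarrow> real mat"
  assumes "n > 0"
    and "A \<in> carrier_mat n n"
    and "invertible_mat A"
    and "A \<ge> 0\<^sub>m n n"
    and "inv_mat A \<ge> 0\<^sub>m n n"
    and "weak_regular_multisplitting n A p U1 V1 E"
    and "weak_regular_multisplitting n A p U2 V2 E"
    and "\<forall>k<p. inv_mat (U1 k) \<ge> inv_mat (U2 k)"
  shows "rho (iter_mat n p U1 V1 E) \<le> rho (iter_mat n p U2 V2 E) \<and>
         rho (iter_mat n p U2 V2 E) < 1"
proof
  note n = assms(1) and A = assms(2-4) and S1 = assms(6) and S2 = assms(7)
  show "rho (iter_mat n p U1 V1 E) \<le> rho (iter_mat n p U2 V2 E)"
    using iter_mat_mono[OF S1 S2 A(1,3)] assms(8)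
    by (intro rho_mono[OF iter_mat_carrier n iter_mat_nonneg[OF S1]]) auto
  show "rho (iter_mat n p U2 V2 E) < 1"
    by (rule rho_iter_mat_less_1[OF n A S2])
qed

end
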